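(* Let $(M,d,\mu,\mathcal{E},\mathcal{F})$ be a metric measure Dirichlet space (as in the context) with diffusion $(X_t,P^x)$, and let $\epsilon>0$. For every $x\in M$, $P^x$-almost surely the map $t\mapsto V_\epsilon(t)$ is continuous.
   Context: Standing framework: $(M,d)$ non-compact, connected, complete, separable metric space with relatively compact open balls $B(x,r)=\{y:d(x,y)<r\}$; $\mu$ a Borel measure with $0<\mu(U)\le\mu(\overline U)<\infty$ for relatively compact open $U$; for every $x\in M$, $r\ge0$ the sphere $\{y:d(x,y)=r\}$ is nonempty and has $\mu$-measure zero; $(\mathcal{E},\mathcal{F})$ a strongly local, regular, symmetric, conservative Dirichlet form on $L^2(M,\mu)$ whose associated Hunt process $(X_t,P^x)$ (a diffusion, i.e. with continuous paths) has a jointly continuous heat kernel. $V_\epsilon(t)=\mu(\bigcup_{s\in[0,t]}B(X_s,\epsilon))$. *)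

theory Defs
  imports "HOL-Analysis.Analysis" "HOL-Probability.Probability"
begin

text \<open>Standing framework for the metric measure space (M,d,mu).
  M is the whole type 'a, d = dist, B(x,r) = ball x r = {y. dist x y < r}.\<close>
definition mm_space :: "'a::metric_space measure \<Rightarrow> bool" where
  "mm_space \<mu> \<longleftrightarrow>
     \<not> compact (UNIV :: 'a::metric_space set) \<and>
     connected (UNIV :: 'a::metric_space set) \<and>
     Topological_Spaces.complete (UNIV :: 'a::metric_space set) \<and>
     (\<exists>D :: 'a::metric_space set. countable D \<and> closure D = UNIV) \<and>
     (\<forall>(x::'a) r. compact (closure (ball x r))) \<and>
     sets \<mu> = sets borel \<and>
     (\<forall>U. open U \<and> U \<noteq> {} \<and> compact (closure U) \<longrightarrow>
          0 < emeasure \<mu> U \<and> emeasure \<mu> (closure U) < \<infinity>) \<and>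
     (\<forall>x r. r \<ge> 0 \<longrightarrow> {y. dist x y = r} \<noteq> {} \<and> emeasure \<mu> {y. dist x y = r} = 0)"

definition diffusion :: "('a::metric_space \<Rightarrow> 'w measure) \<Rightarrow> (real \<Rightarrow> 'w \<Rightarrow> 'a) \<Rightarrow> bool" where
  "diffusion P X \<longleftrightarrow>
     (\<forall>x. prob_space (P x) \<and>
          (\<forall>t\<ge>0. X t \<in> measurable (P x) borel) \<and>
          (AE \<omega> in P x. X 0 \<omega> = x) \<and>
          (AE \<omega> in P x. continuous_on {0..} (\<lambda>t. X t \<omega>)))"

definition sausage_vol :: "'a::metric_space measure \<Rightarrow> real \<Rightarrow> (real \<Rightarrow> 'w \<Rightarrow> 'a) \<Rightarrow> 'w \<Rightarrow> real \<Rightarrow> ennreal" where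
  "sausage_vol \<mu> \<epsilon> X \<omega> t = emeasure \<mu> (\<Union>s\<in>{0..t}. ball (X s \<omega>) \<epsilon>)"

end

theory Submission
  imports Defs
begin

text \<open>Write \<open>U t\<close> for the union of the \<open>\<epsilon>\<close>-balls along the path up to time \<open>t\<close>. If \<open>t\<^sub>n \<rightarrow> a\<close>,
  then every point off the sphere of radius \<open>\<epsilon>\<close> about the path position at time \<open>a\<close> eventually
  lies in \<open>U t\<^sub>n\<close> iff it lies in \<open>U a\<close>: points of \<open>U a\<close> are covered either by an earlier ball or,
  by continuity, by the ball at time \<open>t\<^sub>n\<close>; points strictly outside all these balls stay outside
  for times close to \<open>a\<close>. Spheres are \<open>\<mu>\<close>-null and the \<open>U t\<^sub>n\<close> lie in one bounded set of finite
  measure, so dominated convergence gives \<open>\<mu>(U t\<^sub>n) \<rightarrow> \<mu>(U a)\<close>.\<close>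

lemma emeasure_tendsto_dominated:
  assumes A: "\<And>n. A n \<in> sets M" and B: "B \<in> sets M"
    and D: "D \<in> sets M" "emeasure M D < \<infinity>" "\<And>n. A n \<subseteq> D"
    and conv: "AE x in M. eventually (\<lambda>n. x \<in> A n \<longleftrightarrow> x \<in> B) sequentially"
  shows "(\<lambda>n. emeasure M (A n)) \<longlonglongrightarrow> emeasure M B"
proof -
  have "(\<lambda>n. \<integral>\<^sup>+x. indicator (A n) x \<partial>M) \<longlonglongrightarrow> (\<integral>\<^sup>+x. indicator B x \<partial>M)"
  proof (rule nn_integral_dominated_convergence[where w="indicator D"])
    show "AE x in M. (\<lambda>n. indicator (A n) x) \<longlonglongrightarrow> (indicator B x :: ennreal)"
      using conv
    proof eventually_elim
      case (elim x)
      then have "eventually (\<lambda>n. indicator (A n) x = (indicator B x :: ennreal)) sequentially"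
        by eventually_elim (simp add: indicator_def)
      then show ?case by (rule tendsto_eventually)
    qed
    show "AE x in M. indicator (A n) x \<le> (indicator D x :: ennreal)" for n
      using D(3)[of n] by (auto simp: indicator_def)
  qed (use A B D in auto)
  then show ?thesis using A B by simp
qed

lemma mm_space_emeasure_bounded_finite:
  assumes "mm_space \<mu>" "bounded S" "S \<in> sets \<mu>"
  shows "emeasure \<mu> S < \<infinity>"
proof -
  obtain c r where r: "S \<subseteq> ball c r" "r > 0"
    using bounded_subset_ballD[OF assms(2)] by (metis less_eq_real_def subset_ball zero_less_one)
  have "emeasure \<mu> S \<le> emeasure \<mu> (closure (ball c r))"
    using assms(1) r(1) closure_subset
    by (intro emeasure_mono) (auto simp: mm_space_def)
  also have "\<dots> < \<infinity>"
    using assms(1) r(2) unfolding mm_space_def by auto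
  finally show ?thesis .
qed

lemma mm_space_sphere_null:
  assumes "mm_space \<mu>" "r \<ge> 0"
  shows "{y. dist x y = r} \<in> null_sets \<mu>"
proof -
  have "closed {y. dist x y = r}"
    by (intro closed_Collect_eq continuous_intros)
  then have "{y. dist x y = r} \<in> sets \<mu>"
    using assms(1) by (simp add: mm_space_def)
  then show ?thesis
    using assms unfolding mm_space_def null_sets_def by auto
qed

definition sausage :: "(real \<Rightarrow> 'a::metric_space) \<Rightarrow> real \<Rightarrow> real \<Rightarrow> 'a set" where
  "sausage \<gamma> \<epsilon> t = (\<Union>s\<in>{0..t}. ball (\<gamma> s) \<epsilon>)"

lemma open_sausage: "open (sausage \<gamma> \<epsilon> t)"
  unfolding sausage_def by auto

lemma sausage_mono: "s \<le> t \<Longrightarrow> sausage \<gamma> \<epsilon> s \<subseteq> sausage \<gamma> \<epsilon> t"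
  unfolding sausage_def by (intro UN_mono) auto

lemma bounded_sausage:
  assumes "continuous_on {0..} \<gamma>"
  shows "bounded (sausage \<gamma> \<epsilon> t)"
proof -
  have "compact (\<gamma> ` {0..t})"
    by (rule compact_continuous_image) (auto intro: continuous_on_subset[OF assms])
  then obtain R where R: "\<gamma> ` {0..t} \<subseteq> ball (\<gamma> 0) R"
    using bounded_subset_ballD compact_imp_bounded by blast
  have "sausage \<gamma> \<epsilon> t \<subseteq> ball (\<gamma> 0) (R + \<epsilon>)"
  proof
    fix y assume "y \<in> sausage \<gamma> \<epsilon> t"
    then obtain s where "s \<in> {0..t}" "dist (\<gamma> s) y < \<epsilon>"
      unfolding sausage_def by auto
    moreover have "dist (\<gamma> 0) y \<le> dist (\<gamma> 0) (\<gamma> s) + dist (\<gamma> s) y"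
      by (rule dist_triangle)
    ultimately show "y \<in> ball (\<gamma> 0) (R + \<epsilon>)"
      using R by fastforce
  qed
  then show ?thesis
    using bounded_ball bounded_subset by blast
qed

lemma eventually_mem_sausage:
  assumes \<gamma>: "continuous_on {0..} \<gamma>" and u: "u \<longlonglongrightarrow> a" "\<And>n. u n \<ge> 0"
    and y: "y \<in> sausage \<gamma> \<epsilon> a"
  shows "eventually (\<lambda>n. y \<in> sausage \<gamma> \<epsilon> (u n)) sequentially"
proof -
  obtain s where s: "0 \<le> s" "s \<le> a" "dist (\<gamma> s) y < \<epsilon>"
    using y unfolding sausage_def by auto
  show ?thesis
  proof (cases "s < a")
    case True
    from order_tendstoD(1)[OF u(1) True] show ?thesis
      by eventually_elim (use s in \<open>auto simp: sausage_def\<close>)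
  next
    case False
    with s have "s = a" by simp
    have "(\<lambda>n. \<gamma> (u n)) \<longlonglongrightarrow> \<gamma> a"
      using \<gamma> u s \<open>s = a\<close> unfolding continuous_on_sequentially by (auto simp: o_def)
    moreover have "\<epsilon> - dist (\<gamma> a) y > 0"
      using s \<open>s = a\<close> by simp
    ultimately have "eventually (\<lambda>n. dist (\<gamma> (u n)) (\<gamma> a) < \<epsilon> - dist (\<gamma> a) y) sequentially"
      by (rule tendstoD)
    then show ?thesis
    proof eventually_elim
      case (elim n)
      have "dist (\<gamma> (u n)) y < \<epsilon>"
        using dist_triangle[of "\<gamma> (u n)" y "\<gamma> a"] elim by simp
      then show ?case
        using u(2)[of n] unfolding sausage_def by auto
    qed
  qed
qed

lemma eventually_not_mem_sausage:
  assumes \<gamma>: "continuous_on {0..} \<gamma>" and u: "u \<longlonglongrightarrow> a" and a: "a \<ge> 0"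
    and y: "y \<notin> sausage \<gamma> \<epsilon> a" "dist (\<gamma> a) y \<noteq> \<epsilon>"
  shows "eventually (\<lambda>n. y \<notin> sausage \<gamma> \<epsilon> (u n)) sequentially"
proof -
  have "\<not> dist (\<gamma> a) y < \<epsilon>"
    using y(1) a unfolding sausage_def by auto
  with y(2) have gap: "dist (\<gamma> a) y - \<epsilon> > 0" by simp
  obtain d where d: "d > 0"
    and near: "\<And>s. s \<ge> 0 \<Longrightarrow> dist s a < d \<Longrightarrow> dist (\<gamma> s) (\<gamma> a) < dist (\<gamma> a) y - \<epsilon>"
    using \<gamma> a gap unfolding continuous_on_iff by (metis atLeast_iff)
  have "eventually (\<lambda>n. dist (u n) a < d) sequentially"
    using u d by (rule tendstoD)
  then show ?thesis
  proof eventually_elim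
    case (elim n)
    show ?case
    proof
      assume "y \<in> sausage \<gamma> \<epsilon> (u n)"
      then obtain s where s: "0 \<le> s" "s \<le> u n" "dist (\<gamma> s) y < \<epsilon>"
        unfolding sausage_def by auto
      have "\<not> s \<le> a"
        using y(1) s unfolding sausage_def by auto
      then have "dist s a < d"
        using elim s unfolding dist_real_def by auto
      then have "dist (\<gamma> s) (\<gamma> a) < dist (\<gamma> a) y - \<epsilon>"
        using near s(1) by blast
      then show False
        using dist_triangle[of "\<gamma> a" y "\<gamma> s"] s(3) by (simp add: dist_commute)
    qed
  qed
qed

lemma continuous_on_emeasure_sausage:
  assumes mm: "mm_space \<mu>" and \<gamma>: "continuous_on {0..} \<gamma>" and \<epsilon>: "\<epsilon> > 0"
  shows "continuous_on {0..} (\<lambda>t. emeasure \<mu> (sausage \<gamma> \<epsilon> t))"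
proof (rule continuous_on_sequentiallyI)
  fix u :: "nat \<Rightarrow> real" and a :: real
  assume u: "\<forall>n. u n \<in> {0..}" and a: "a \<in> {0..}" and ua: "u \<longlonglongrightarrow> a"
  have sets: "sausage \<gamma> \<epsilon> t \<in> sets \<mu>" for t
    using mm open_sausage[of \<gamma> \<epsilon> t] by (simp add: mm_space_def)
  obtain T where T: "\<And>n. u n \<le> T"
    using convergent_imp_bounded[OF ua] by (metis abs_le_D1 bounded_iff rangeI real_norm_def)
  have "AE y in \<mu>. eventually (\<lambda>n. y \<in> sausage \<gamma> \<epsilon> (u n) \<longleftrightarrow> y \<in> sausage \<gamma> \<epsilon> a) sequentially"
  proof (rule AE_I'[OF mm_space_sphere_null[OF mm, of \<epsilon> "\<gamma> a"]])
    show "{y \<in> space \<mu>. \<not> eventually (\<lambda>n. y \<in> sausage \<gamma> \<epsilon> (u n) \<longleftrightarrow> y \<in> sausage \<gamma> \<epsilon> a) sequentially}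
        \<subseteq> {y. dist (\<gamma> a) y = \<epsilon>}"
    proof (clarify, rule ccontr)
      fix y assume y: "dist (\<gamma> a) y \<noteq> \<epsilon>"
        and not_eq: "\<not> eventually (\<lambda>n. y \<in> sausage \<gamma> \<epsilon> (u n) \<longleftrightarrow> y \<in> sausage \<gamma> \<epsilon> a) sequentially"
      show False
      proof (cases "y \<in> sausage \<gamma> \<epsilon> a")
        case True
        with eventually_mem_sausage[OF \<gamma> ua] u not_eq show False
          by (auto elim: eventually_mono)
      next
        case False
        with eventually_not_mem_sausage[OF \<gamma> ua _ _ y] a not_eq show False
          by (auto elim: eventually_mono)
      qed
    qed
  qed (use \<epsilon> in simp)
  then show "(\<lambda>n. emeasure \<mu> (sausage \<gamma> \<epsilon> (u n))) \<longlonglongrightarrow> emeasure \<mu> (sausage \<gamma> \<epsilon> a)"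
    using sausage_mono[OF T] sets
    by (intro emeasure_tendsto_dominated[where D="sausage \<gamma> \<epsilon> T"]
        mm_space_emeasure_bounded_finite[OF mm bounded_sausage[OF \<gamma>]])
qed

theorem lemma2p3:
  fixes \<mu> :: "'a::metric_space measure"
    and P :: "'a \<Rightarrow> 'w measure"
    and X :: "real \<Rightarrow> 'w \<Rightarrow> 'a"
    and \<epsilon> :: real
  assumes "mm_space \<mu>"
    and "diffusion P X"
    and "\<epsilon> > 0"
  shows "\<forall>x. AE \<omega> in P x. continuous_on {0..} (sausage_vol \<mu> \<epsilon> X \<omega>)"
proof
  fix x
  have "AE \<omega> in P x. continuous_on {0..} (\<lambda>t. X t \<omega>)"
    using assms(2) unfolding diffusion_def by blast
  then show "AE \<omega> in P x. continuous_on {0..} (sausage_vol \<mu> \<epsilon> X \<omega>)"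
  proof eventually_elim
    case (elim \<omega>)
    from continuous_on_emeasure_sausage[OF assms(1) elim assms(3)] show ?case
      by (simp add: sausage_vol_def[abs_def] sausage_def)
  qed
qed

end
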